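(* Let $q=p^e$ with $p$ prime, and let $\mathcal P$ be a projective plane of order $q$ which is $((\infty),[\infty])$-transitive with $\Gamma((\infty),[\infty])$ elementary abelian. Suppose $T\in\mathbb F_q[X,Y,Z]$ is a PTR polynomial obtained from coordinatising $\mathcal P$ optimally, so that the resulting additive loop is field addition, and let $M_2(X,Y)$ be the reduced polynomial with $M_2(x,y)=T(x,y,0)$. Then for every $a\in\mathbb F_q\setminus\{0,1\}$ the polynomial $f_a(X)=M_2(X,a)-X$ is a complete mapping on $\mathbb F_q$.
   Context: A polynomial $f\in\mathbb F_q[X]$ is a complete mapping on $\mathbb F_q$ if both $f(X)$ and $f(X)+X$ are permutation polynomials of $\mathbb F_q$. Coordinatisation: for a projective plane of order $q$, choose a quadrangle $O,X,Y,I$, label $O=(0,0)$, $X=(0)$, $Y=(\infty)$, $I=(1,1)$, $[\infty]=\overline{XY}$, $[0]=\overline{OY}$, $[0,0]=\overline{OX}$; $(0,1)=\overline{XI}\cap[0]$, $(1,0)=\overline{YI}\cap[0,0]$, $(1)=\overline{(1,0)(0,1)}\cap[\infty]$; other points of $[0]$ are labelled $(0,a)$ arbitrarily, then $(a,0)=\overline{(0,a)(1)}\cap[0,0]$, $(a)=\overline{(0,a)(1,0)}\cap[\infty]$, $(a,b)=\overline{(a,0)Y}\cap\overline{(0,b)X}$, $[m,k]=\overline{(m)(0,k)}$. The PTR polynomial is the reduced $T$ with $T(m,x,y)=k$ iff $(x,y)\in[m,k]$; $x\oplus y=T(1,x,y)$, $x\odot y=T(x,y,0)$; $T$ is linear if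 $T(x,y,z)=(x\odot y)\oplus z$; a PTR polynomial satisfies $T(x,1,0)=x$ and, for $a\ne c$, $T(x,a,b)=T(x,c,d)$ has a unique solution $x$. $(P,L)$-transitivity: $\Gamma(P,L)$ (central collineations with centre $P$ and axis $L$) is transitive on the points $\ne P$, not on $L$, of each line through $P$. Optimal coordinatisation (the paper's convention): when $\mathcal P$ is $((\infty),[\infty])$-transitive, the coordinatisation is chosen with $Y$ and $\overline{XY}$ the centre and axis, so that the PTR is linear with $\oplus$ associative and isomorphic to $\Gamma((\infty),[\infty])$, and when this group is elementary abelian the labelling is chosen so that $\oplus$ is addition in $\mathbb F_q$. *)

theory Defs
  imports "HOL-Computational_Algebra.Primes"
begin

text \<open>Planar ternary ring (PTR) function in the paper's coordinatisation convention:
  T m x y = k  iff the affine point (x,y) lies on the line [m,k].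
  Every function on a finite field is given by a unique reduced polynomial,
  so PTR polynomials are represented by their polynomial functions.
  The axioms below are exactly the incidence conditions of the projective plane
  expressed in the coordinates (normalisation by the quadrangle O,X,Y,I and
  the labelling rules, plus the affine-plane incidence axioms).\<close>

definition is_PTR :: "('a::{zero,one} \<Rightarrow> 'a \<Rightarrow> 'a \<Rightarrow> 'a) \<Rightarrow> bool" where
  "is_PTR T \<longleftrightarrow>
     (\<forall>m y. T m 0 y = y) \<and>
     (\<forall>x y. T 0 x y = y) \<and>
     (\<forall>m. T m 1 0 = m) \<and>
     (\<forall>x. T 1 x 0 = x) \<and>
     (\<forall>m x k. \<exists>!y. T m x y = k) \<and>
     (\<forall>a b c d. a \<noteq> c \<longrightarrow> (\<exists>!m. T m a b = T m c d)) \<and>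
     (\<forall>m k m' k'. m \<noteq> m' \<longrightarrow> (\<exists>!p. T m (fst p) (snd p) = k \<and> T m' (fst p) (snd p) = k'))"

definition linear_field_add_PTR :: "('a::field \<Rightarrow> 'a \<Rightarrow> 'a \<Rightarrow> 'a) \<Rightarrow> bool" where
  "linear_field_add_PTR T \<longleftrightarrow>
     is_PTR T \<and> (\<forall>x y. T 1 x y = x + y) \<and> (\<forall>x y z. T x y z = T 1 (T x y 0) z)"

definition complete_mapping :: "('a::field \<Rightarrow> 'a) \<Rightarrow> bool" where
  "complete_mapping f \<longleftrightarrow> bij f \<and> bij (\<lambda>x. f x + x)"

end

theory Submission
  imports Defs
begin

text \<open>Write \<open>x \<odot> a = T x a 0\<close>. For abscissae \<open>a \<noteq> c\<close> exactly one slope \<open>m\<close> makes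
  \<open>T m a b = T m c d\<close>. Comparing the abscissae \<open>a\<close> and \<open>0\<close> shows that \<open>m \<mapsto> m \<odot> a\<close>
  is a bijection for \<open>a \<noteq> 0\<close>; comparing \<open>a\<close> and \<open>1\<close>, where linearity gives
  \<open>T m 1 k = m + k\<close>, shows that \<open>m \<mapsto> m \<odot> a - m\<close> is a bijection for \<open>a \<noteq> 1\<close>.\<close>

lemma is_PTR_zero_abscissa: "is_PTR T \<Longrightarrow> T m 0 y = y"
  unfolding is_PTR_def by simp

lemma is_PTR_unit_abscissa: "is_PTR T \<Longrightarrow> T m 1 0 = m"
  unfolding is_PTR_def by simp

lemma is_PTR_unique_slope:
  assumes "is_PTR T" and "a \<noteq> c"
  shows "\<exists>!m. T m a b = T m c d"
proof -
  have "\<forall>a b c d. a \<noteq> c \<longrightarrow> (\<exists>!m. T m a b = T m c d)"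
    using assms(1) unfolding is_PTR_def by (elim conjE) assumption
  then show ?thesis using assms(2) by simp
qed

lemma linear_field_add_PTR_is_PTR: "linear_field_add_PTR T \<Longrightarrow> is_PTR T"
  unfolding linear_field_add_PTR_def by simp

lemma linear_field_add_PTR_eq:
  assumes "linear_field_add_PTR T"
  shows "T m x y = T m x 0 + y"
proof -
  have "T 1 u v = u + v" and "T m x y = T 1 (T m x 0) y" for u v
    using assms unfolding linear_field_add_PTR_def by blast+
  then show ?thesis by simp
qed

lemma bij_PTR_mult_right:
  assumes "is_PTR T" and "a \<noteq> 0"
  shows "bij (\<lambda>m. T m a 0)"
  unfolding bij_iff
proof
  fix k
  show "\<exists>!m. T m a 0 = k"
    using is_PTR_unique_slope[OF assms(1), of a 0 0 k] assms(2)
    by (simp add: is_PTR_zero_abscissa[OF assms(1)])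
qed

lemma bij_PTR_mult_right_minus_id:
  assumes "linear_field_add_PTR T" and "a \<noteq> 1"
  shows "bij (\<lambda>m. T m a 0 - m)"
  unfolding bij_iff
proof
  fix k
  have PTR: "is_PTR T"
    using assms(1) by (rule linear_field_add_PTR_is_PTR)
  have "T m 1 k = m + k" for m
    using linear_field_add_PTR_eq[OF assms(1), of m 1 k] by (simp add: is_PTR_unit_abscissa[OF PTR])
  then have "T m a 0 = T m 1 k \<longleftrightarrow> T m a 0 - m = k" for m
    by (auto simp: algebra_simps)
  then show "\<exists>!m. T m a 0 - m = k"
    using is_PTR_unique_slope[OF PTR assms(2), of 0 k] by simp
qed

theorem lemma5p3:
  fixes T :: "'a::{finite,field} \<Rightarrow> 'a \<Rightarrow> 'a \<Rightarrow> 'a"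
    and M2 :: "'a \<Rightarrow> 'a \<Rightarrow> 'a"
    and p e :: nat
  assumes "prime p" and "e > 0" and "card (UNIV :: 'a set) = p ^ e"
    and "linear_field_add_PTR T"
  and "\<And>x y. M2 x y = T x y 0"
  shows "\<forall>a. a \<noteq> 0 \<and> a \<noteq> 1 \<longrightarrow> complete_mapping (\<lambda>x. M2 x a - x)"
proof (intro allI impI)
  fix a :: 'a
  assume a: "a \<noteq> 0 \<and> a \<noteq> 1"
  have "bij (\<lambda>x. M2 x a)"
    using bij_PTR_mult_right[OF linear_field_add_PTR_is_PTR[OF assms(4)]] a
    by (simp add: assms(5))
  moreover have "bij (\<lambda>x. M2 x a - x)"
    using bij_PTR_mult_right_minus_id[OF assms(4)] a by (simp add: assms(5))
  ultimately show "complete_mapping (\<lambda>x. M2 x a - x)"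
    unfolding complete_mapping_def by simp
qed

end
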